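(* Let $l\ge 1$ and let $a_1,\dots,a_{2l+1}$ be a chain of simple closed curves on an oriented surface ($a_i$ and $a_{i+1}$ meet transversely once, $a_i\cap a_j=\emptyset$ for $|i-j|\ge2$). Define $\phi_l=a_{2l+1}^{\,l+1}a_{2l-1}^{\,l}\cdots a_5^{3}a_3^{2}a_1$. Let $D=d_1\cdots d_{k_1}$ and $E=e_1\cdots e_{k_2}$ be arbitrary products of right-handed Dehn twists, and write ${}_{\psi}(D)={}_{\psi}(d_1)\cdots{}_{\psi}(d_{k_1})$, ${}_{\psi}(E)={}_{\psi}(e_1)\cdots{}_{\psi}(e_{k_2})$. Then (a) $D\cdot a_{2l}\cdots a_2a_1\cdot a_{2l+1}\cdots a_2a_1\cdot E\ \sim_C\ {}_{\phi_l}(D)\cdot(a_{2l+1}^{\,l+1}\, a_{2l}\cdots a_2a_1)\cdot(b_{2l}\cdots b_4 b_2)\cdot{}_{\phi_l}(E)$; (b) $D\cdot a_1a_2\cdots a_{2l+1}\cdot a_1a_2\cdots a_{2l}\cdot E\ \sim_C\ {}_{\phi_l^{-1}}(D)\cdot(\bar b_2\bar b_4\cdots\bar b_{2l})\cdot(a_1a_2\cdots a_{2l}\,a_{2l+1}^{\,l+1})\cdot{}_{\phi_l^{-1}}(E)$.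
   Context: $a_i$ denotes the right-handed Dehn twist $t_{a_i}$; for a mapping class $f$ and a Dehn twist $t_x$, ${}_f(x)$ denotes $t_{f(x)}=ft_xf^{-1}$. $b_i=t_{a_{i+1}}(a_i)$ and $\bar b_i=t_{a_{i+1}}^{-1}(a_i)$. Words of Dehn twists are related by $\sim_C$ if one is obtained from the other by a finite sequence of elementary transformations ($\cdots t_vt_w\cdots\leftrightarrow\cdots t_{t_v(w)}t_v\cdots$) and conjugations, where a conjugation moves the last letter of a word to the front (or vice versa), i.e. cyclic permutation, equivalently simultaneous conjugation of all letters. *)

theory Defs
  imports "HOL-Algebra.Group"
begin

text \<open>Abstract model: the Dehn twist t_x is identified with an element of a group G
(the mapping class group); since a Dehn twist determines its curve, a word of Dehn
twists is a list of group elements.  For a mapping class f, the twist t_{f(x)} equals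
f t_x f^{-1}, written conjg G f x.\<close>

definition conjg :: "('a, 'b) monoid_scheme \<Rightarrow> 'a \<Rightarrow> 'a \<Rightarrow> 'a" where
  "conjg G f x = f \<otimes>\<^bsub>G\<^esub> x \<otimes>\<^bsub>G\<^esub> inv\<^bsub>G\<^esub> f"

inductive C_step :: "('a, 'b) monoid_scheme \<Rightarrow> 'a list \<Rightarrow> 'a list \<Rightarrow> bool"
  for G where
  elementary: "C_step G (xs @ [v, w] @ ys) (xs @ [conjg G v w, v] @ ys)"
| conjugation: "C_step G (xs @ [x]) (x # xs)"

definition C_equiv :: "('a, 'b) monoid_scheme \<Rightarrow> 'a list \<Rightarrow> 'a list \<Rightarrow> bool" where
  "C_equiv G u w \<longleftrightarrow> (symclp (C_step G))\<^sup>*\<^sup>* u w"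

text \<open>Chain a_1,...,a_n of Dehn twists: adjacent ones satisfy the braid relation
(curves meeting transversely once), non-adjacent ones commute (disjoint curves).\<close>
definition twist_chain :: "('a, 'b) monoid_scheme \<Rightarrow> (nat \<Rightarrow> 'a) \<Rightarrow> nat \<Rightarrow> bool" where
  "twist_chain G a n \<longleftrightarrow>
     (\<forall>i\<in>{1..n}. a i \<in> carrier G) \<and>
     (\<forall>i. 1 \<le> i \<and> i < n \<longrightarrow>
        a i \<otimes>\<^bsub>G\<^esub> a (Suc i) \<otimes>\<^bsub>G\<^esub> a i = a (Suc i) \<otimes>\<^bsub>G\<^esub> a i \<otimes>\<^bsub>G\<^esub> a (Suc i)) \<and>
     (\<forall>i j. i \<in> {1..n} \<and> j \<in> {1..n} \<and> i + 2 \<le> j \<longrightarrow>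
        a i \<otimes>\<^bsub>G\<^esub> a j = a j \<otimes>\<^bsub>G\<^esub> a i)"

definition phi :: "('a, 'b) monoid_scheme \<Rightarrow> (nat \<Rightarrow> 'a) \<Rightarrow> nat \<Rightarrow> 'a" where
  "phi G a l = foldr (\<lambda>j acc. (a (2*j+1) [^]\<^bsub>G\<^esub> (j+1)) \<otimes>\<^bsub>G\<^esub> acc) (rev [0..<Suc l]) \<one>\<^bsub>G\<^esub>"

definition bcurve :: "('a, 'b) monoid_scheme \<Rightarrow> (nat \<Rightarrow> 'a) \<Rightarrow> nat \<Rightarrow> 'a" where
  "bcurve G a i = conjg G (a (Suc i)) (a i)"

definition bbar :: "('a, 'b) monoid_scheme \<Rightarrow> (nat \<Rightarrow> 'a) \<Rightarrow> nat \<Rightarrow> 'a" where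
  "bbar G a i = conjg G (inv\<^bsub>G\<^esub> (a (Suc i))) (a i)"

end

theory Submission
  imports Defs
begin

(* Going from l to l+1 only uses the relations among x = a_{2l+1},
   y = a_{2l+2}, z = a_{2l+3} and the earlier letters: move z y to the left through
   a_{2l} ... a_1, apply the induction hypothesis with context D y x z y, perform a
   local braid move turning x^m(y) x z x^m(y) x^m into z^{m+1} followed by three
   letters, conjugate the whole word by z^{m+1} (a C-equivalence, since z occurs in
   the word), and finally move b_{2l+2} = z(y) through a_{2l} ... a_1.
   Part (b) follows from part (a) for the chain of inverse twists: reversing a word
   and inverting its letters preserves C-equivalence. *)

section \<open>Hurwitz equivalence and carrier-restricted C-equivalence\<close>

(* A Hurwitz move is an elementary transformation  ... p q ...  ->  ... p(q) p ...
   between words of group elements; unlike a conjugation it may be performed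
   inside any context, which is what makes it the workhorse of the proof. *)
definition hurwitz_step :: "('a, 'b) monoid_scheme \<Rightarrow> 'a list \<Rightarrow> 'a list \<Rightarrow> bool" where
  "hurwitz_step G u v \<longleftrightarrow> (\<exists>xs p q ys. p \<in> carrier G \<and> q \<in> carrier G \<and> set xs \<subseteq> carrier G
      \<and> set ys \<subseteq> carrier G \<and> u = xs @ [p, q] @ ys \<and> v = xs @ [conjg G p q, p] @ ys)"

definition hurwitz :: "('a, 'b) monoid_scheme \<Rightarrow> 'a list \<Rightarrow> 'a list \<Rightarrow> bool" where
  "hurwitz G = (symclp (hurwitz_step G))\<^sup>*\<^sup>*"

(* The relation ~_C restricted to words over the carrier; the restriction is needed
   for the inversion symmetry (cequiv_rev_inv) and is harmless otherwise. *)
definition carrier_C_step :: "('a, 'b) monoid_scheme \<Rightarrow> 'a list \<Rightarrow> 'a list \<Rightarrow> bool" where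
  "carrier_C_step G u v \<longleftrightarrow> C_step G u v \<and> set u \<subseteq> carrier G \<and> set v \<subseteq> carrier G"

definition cequiv :: "('a, 'b) monoid_scheme \<Rightarrow> 'a list \<Rightarrow> 'a list \<Rightarrow> bool" where
  "cequiv G = (symclp (carrier_C_step G))\<^sup>*\<^sup>*"

lemma symclp_rtranclp_sym: "(symclp r)\<^sup>*\<^sup>* x y \<Longrightarrow> (symclp r)\<^sup>*\<^sup>* y x"
  by (metis equivclp_def equivclp_sym)

lemma cequiv_imp_C_equiv: "cequiv G u v \<Longrightarrow> C_equiv G u v"
  unfolding cequiv_def C_equiv_def
  by (erule rtranclp_mono[THEN predicate2D, rotated]) (auto simp: symclp_def carrier_C_step_def)

context group
begin

lemma inv_cancel_left[simp]:
  "g \<in> carrier G \<Longrightarrow> x \<in> carrier G \<Longrightarrow> inv g \<otimes> (g \<otimes> x) = x"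
  "g \<in> carrier G \<Longrightarrow> x \<in> carrier G \<Longrightarrow> g \<otimes> (inv g \<otimes> x) = x"
  by (simp_all add: m_assoc[symmetric])

lemma conjg_closed[simp]: "p \<in> carrier G \<Longrightarrow> q \<in> carrier G \<Longrightarrow> conjg G p q \<in> carrier G"
  by (simp add: conjg_def)

lemma conjg_mult: "g \<in> carrier G \<Longrightarrow> h \<in> carrier G \<Longrightarrow> w \<in> carrier G \<Longrightarrow>
   conjg G g (conjg G h w) = conjg G (g \<otimes> h) w"
  by (simp add: conjg_def m_assoc inv_mult_group)

lemma conjg_one[simp]: "w \<in> carrier G \<Longrightarrow> conjg G \<one> w = w"
  by (simp add: conjg_def)

lemma conjg_inv_cancel[simp]:
  "g \<in> carrier G \<Longrightarrow> w \<in> carrier G \<Longrightarrow> conjg G (inv g) (conjg G g w) = w"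
  "g \<in> carrier G \<Longrightarrow> w \<in> carrier G \<Longrightarrow> conjg G g (conjg G (inv g) w) = w"
  by (simp_all add: conjg_def m_assoc[symmetric]) (simp_all add: m_assoc)

lemma conjg_comm: "g \<in> carrier G \<Longrightarrow> w \<in> carrier G \<Longrightarrow> g \<otimes> w = w \<otimes> g \<Longrightarrow> conjg G g w = w"
  by (simp add: conjg_def m_assoc)

lemma conjg_self[simp]: "g \<in> carrier G \<Longrightarrow> conjg G g g = g"
  by (simp add: conjg_def m_assoc)

lemma conjg_inv: "g \<in> carrier G \<Longrightarrow> w \<in> carrier G \<Longrightarrow> inv (conjg G g w) = conjg G g (inv w)"
  by (simp add: conjg_def m_assoc inv_mult_group)

lemma map_conjg_mult: "g \<in> carrier G \<Longrightarrow> h \<in> carrier G \<Longrightarrow> set U \<subseteq> carrier G \<Longrightarrow>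
  map (conjg G g) (map (conjg G h) U) = map (conjg G (g \<otimes> h)) U"
  by (auto simp: conjg_mult)

lemma map_conjg_inv_cancel[simp]:
  "g \<in> carrier G \<Longrightarrow> set U \<subseteq> carrier G \<Longrightarrow> map (conjg G g) (map (conjg G (inv g)) U) = U"
  "g \<in> carrier G \<Longrightarrow> set U \<subseteq> carrier G \<Longrightarrow> map (conjg G (inv g)) (map (conjg G g) U) = U"
  by (induction U) auto

lemma map_conjg_comm: "g \<in> carrier G \<Longrightarrow> set U \<subseteq> carrier G \<Longrightarrow> (\<forall>u\<in>set U. g \<otimes> u = u \<otimes> g) \<Longrightarrow>
  map (conjg G g) U = U"
  by (induction U) (auto simp: conjg_comm)

lemma comm_mult: "g \<in> carrier G \<Longrightarrow> x \<in> carrier G \<Longrightarrow> y \<in> carrier G \<Longrightarrow>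
  g \<otimes> x = x \<otimes> g \<Longrightarrow> g \<otimes> y = y \<otimes> g \<Longrightarrow> g \<otimes> (x \<otimes> y) = (x \<otimes> y) \<otimes> g"
  by (metis m_assoc)

lemma comm_inv: "g \<in> carrier G \<Longrightarrow> x \<in> carrier G \<Longrightarrow> g \<otimes> x = x \<otimes> g \<Longrightarrow> g \<otimes> inv x = inv x \<otimes> g"
proof -
  assume a: "g \<in> carrier G" "x \<in> carrier G" "g \<otimes> x = x \<otimes> g"
  have "g \<otimes> inv x = inv x \<otimes> (x \<otimes> g) \<otimes> inv x" using a by (simp add: m_assoc[symmetric])
  also have "\<dots> = inv x \<otimes> (g \<otimes> x) \<otimes> inv x" using a by simp
  also have "\<dots> = inv x \<otimes> g" using a(1,2) by (simp add: m_assoc)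
  finally show ?thesis .
qed

lemma comm_pow: "g \<in> carrier G \<Longrightarrow> x \<in> carrier G \<Longrightarrow> g \<otimes> x = x \<otimes> g \<Longrightarrow>
  g \<otimes> x [^] (n::nat) = x [^] n \<otimes> g"
  by (metis group_commutes_pow)

lemma comm_conjg: "g \<in> carrier G \<Longrightarrow> x \<in> carrier G \<Longrightarrow> y \<in> carrier G \<Longrightarrow>
  g \<otimes> x = x \<otimes> g \<Longrightarrow> g \<otimes> y = y \<otimes> g \<Longrightarrow> g \<otimes> conjg G x y = conjg G x y \<otimes> g"
  unfolding conjg_def by (intro comm_mult comm_inv) auto

lemma hurwitz_refl[simp]: "hurwitz G u u"
  by (simp add: hurwitz_def)

lemma hurwitz_trans[trans]: "hurwitz G u v \<Longrightarrow> hurwitz G v w \<Longrightarrow> hurwitz G u w"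
  unfolding hurwitz_def by (rule rtranclp_trans)

lemma hurwitz_sym: "hurwitz G u v \<Longrightarrow> hurwitz G v u"
  unfolding hurwitz_def by (rule symclp_rtranclp_sym)

lemma hurwitz_step_ctx: "hurwitz_step G u v \<Longrightarrow> set xs \<subseteq> carrier G \<Longrightarrow> set ys \<subseteq> carrier G \<Longrightarrow>
  hurwitz_step G (xs @ u @ ys) (xs @ v @ ys)"
  unfolding hurwitz_step_def
  apply clarify
  subgoal for xs' p q ys'
    by (rule exI[of _ "xs @ xs'"], rule exI[of _ p], rule exI[of _ q], rule exI[of _ "ys' @ ys"]) auto
  done

lemma hurwitz_ctx: "hurwitz G u v \<Longrightarrow> set xs \<subseteq> carrier G \<Longrightarrow> set ys \<subseteq> carrier G \<Longrightarrow>
  hurwitz G (xs @ u @ ys) (xs @ v @ ys)"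
  unfolding hurwitz_def
proof (induction rule: rtranclp_induct)
  case (step y z)
  then have "symclp (hurwitz_step G) (xs @ y @ ys) (xs @ z @ ys)"
    by (auto simp: symclp_def intro: hurwitz_step_ctx)
  with step show ?case by (meson rtranclp.rtrancl_into_rtrancl)
qed simp

lemma hurwitz_elem: "p \<in> carrier G \<Longrightarrow> q \<in> carrier G \<Longrightarrow> hurwitz G [p, q] [conjg G p q, p]"
  unfolding hurwitz_def hurwitz_step_def
  by (rule r_into_rtranclp, rule symclpI1)
     (rule exI[of _ "[]"], rule exI[of _ p], rule exI[of _ q], rule exI[of _ "[]"], simp)

lemma hurwitz_step_imp_C_step: "hurwitz_step G u v \<Longrightarrow> carrier_C_step G u v"
  unfolding hurwitz_step_def carrier_C_step_def
  apply clarify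
  subgoal for xs p q ys
    using C_step.elementary[of G xs p q ys] by auto
  done

lemma hurwitz_imp_cequiv: "hurwitz G u v \<Longrightarrow> cequiv G u v"
  unfolding hurwitz_def cequiv_def
  by (erule rtranclp_mono[THEN predicate2D, rotated]) (auto simp: symclp_def intro: hurwitz_step_imp_C_step)

end

definition lprod :: "('a, 'b) monoid_scheme \<Rightarrow> 'a list \<Rightarrow> 'a" where
  "lprod G xs = foldr (\<lambda>x acc. x \<otimes>\<^bsub>G\<^esub> acc) xs \<one>\<^bsub>G\<^esub>"

context group
begin

lemma lprod_Nil[simp]: "lprod G [] = \<one>"
  by (simp add: lprod_def)

lemma lprod_Cons[simp]: "lprod G (x # xs) = x \<otimes> lprod G xs"
  by (simp add: lprod_def)

lemma lprod_closed[simp]: "set xs \<subseteq> carrier G \<Longrightarrow> lprod G xs \<in> carrier G"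
  by (induction xs) auto

lemma hurwitz_slide: "x \<in> carrier G \<Longrightarrow> set U \<subseteq> carrier G \<Longrightarrow>
  hurwitz G (x # U) (map (conjg G x) U @ [x])"
proof (induction U)
  case (Cons u U)
  have "hurwitz G (x # u # U) ([conjg G x u, x] @ U)"
    using hurwitz_ctx[OF hurwitz_elem[of x u], of "[]" U] Cons.prems by simp
  moreover have "hurwitz G ([conjg G x u] @ (x # U) @ []) ([conjg G x u] @ (map (conjg G x) U @ [x]) @ [])"
    using Cons by (intro hurwitz_ctx) auto
  ultimately show ?case by (auto intro: hurwitz_trans)
qed simp

lemma hurwitz_slide_comm: "w \<in> carrier G \<Longrightarrow> set U \<subseteq> carrier G \<Longrightarrow> (\<forall>u\<in>set U. w \<otimes> u = u \<otimes> w) \<Longrightarrow>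
  hurwitz G (w # U) (U @ [w])"
  using hurwitz_slide[of w U] by (simp add: map_conjg_comm)

lemma hurwitz_commuting_words:
  assumes "set W \<subseteq> carrier G" "set A \<subseteq> carrier G" "\<forall>w\<in>set W. \<forall>u\<in>set A. w \<otimes> u = u \<otimes> w"
  shows "hurwitz G (W @ A) (A @ W)"
  using assms
proof (induction W)
  case (Cons w W)
  have "hurwitz G ([w] @ (W @ A) @ []) ([w] @ (A @ W) @ [])"
    using Cons by (intro hurwitz_ctx) auto
  moreover have "hurwitz G ([] @ (w # A) @ W) ([] @ (A @ [w]) @ W)"
    using Cons.prems by (intro hurwitz_ctx hurwitz_slide_comm) auto
  ultimately show ?case by (auto intro: hurwitz_trans)
qed simp

lemma hurwitz_slide_pow: "x \<in> carrier G \<Longrightarrow> set U \<subseteq> carrier G \<Longrightarrow>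
  hurwitz G (replicate m x @ U) (map (conjg G (x [^] m)) U @ replicate m x)"
proof (induction m)
  case 0 then show ?case by (simp add: map_idI subset_iff)
next
  case (Suc m)
  have "hurwitz G ([x] @ (replicate m x @ U) @ []) ([x] @ (map (conjg G (x [^] m)) U @ replicate m x) @ [])"
    using Suc by (intro hurwitz_ctx) auto
  moreover have "hurwitz G ([] @ (x # map (conjg G (x [^] m)) U) @ replicate m x)
      ([] @ (map (conjg G x) (map (conjg G (x [^] m)) U) @ [x]) @ replicate m x)"
    using Suc.prems by (intro hurwitz_ctx hurwitz_slide) auto
  moreover have "map (conjg G x) (map (conjg G (x [^] m)) U) = map (conjg G (x [^] Suc m)) U"
    using Suc.prems by (simp add: map_conjg_mult nat_pow_Suc2[symmetric] del: map_map nat_pow_Suc)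
  ultimately have "hurwitz G (x # replicate m x @ U) (map (conjg G (x [^] Suc m)) U @ [x] @ replicate m x)"
    by (simp only: append.simps append_Nil append_Nil2 append_assoc) (blast intro: hurwitz_trans)
  then show ?case by (simp only: replicate_Suc append.simps append_Nil)
qed

lemma hurwitz_slide_pow_left: "x \<in> carrier G \<Longrightarrow> set U \<subseteq> carrier G \<Longrightarrow>
  hurwitz G (U @ replicate m x) (replicate m x @ map (conjg G (inv (x [^] m))) U)"
proof -
  assume x: "x \<in> carrier G" and U: "set U \<subseteq> carrier G"
  have "set (map (conjg G (inv (x [^] m))) U) \<subseteq> carrier G"
    using x U by auto
  from hurwitz_slide_pow[OF x this, of m]
  have "hurwitz G (replicate m x @ map (conjg G (inv (x [^] m))) U) (U @ replicate m x)"
    using x U by (simp del: map_map)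
  then show ?thesis by (rule hurwitz_sym)
qed

lemma hurwitz_slide_block: "w \<in> carrier G \<Longrightarrow> set U \<subseteq> carrier G \<Longrightarrow>
  hurwitz G (U @ [w]) (conjg G (lprod G U) w # U)"
proof (induction U)
  case (Cons u U)
  have "hurwitz G ([u] @ (U @ [w]) @ []) ([u] @ (conjg G (lprod G U) w # U) @ [])"
    using Cons by (intro hurwitz_ctx) auto
  moreover have "hurwitz G ([] @ [u, conjg G (lprod G U) w] @ U) ([] @ [conjg G u (conjg G (lprod G U) w), u] @ U)"
    using Cons.prems by (intro hurwitz_ctx hurwitz_elem) auto
  ultimately show ?case using Cons.prems by (auto intro: hurwitz_trans simp: conjg_mult)
qed simp

lemma hurwitz_pow_through_block:
  assumes "x \<in> carrier G" "z \<in> carrier G" "set V \<subseteq> carrier G"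
    and "conjg G (inv (lprod G V)) x = z"
  shows "hurwitz G (replicate m x @ V) (V @ replicate m z)"
proof (induction m)
  case (Suc m)
  have "hurwitz G ([x] @ (replicate m x @ V) @ []) ([x] @ (V @ replicate m z) @ [])"
    using Suc assms by (intro hurwitz_ctx) auto
  moreover have "conjg G (lprod G V) z = x"
    using assms(4)[symmetric] assms(1,3) by simp
  then have "hurwitz G (x # V) (V @ [z])"
    using hurwitz_slide_block[of z V] assms by (simp add: hurwitz_sym)
  then have "hurwitz G ([] @ (x # V) @ replicate m z) ([] @ (V @ [z]) @ replicate m z)"
    using assms by (intro hurwitz_ctx) auto
  ultimately show ?case by (auto intro: hurwitz_trans)
qed simp

lemma cequiv_refl[simp]: "cequiv G u u"
  by (simp add: cequiv_def)

lemma cequiv_trans[trans]: "cequiv G u v \<Longrightarrow> cequiv G v w \<Longrightarrow> cequiv G u w"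
  unfolding cequiv_def by (rule rtranclp_trans)

lemma cequiv_conjugation: "set xs \<subseteq> carrier G \<Longrightarrow> x \<in> carrier G \<Longrightarrow> cequiv G (xs @ [x]) (x # xs)"
  unfolding cequiv_def
  by (rule r_into_rtranclp, rule symclpI1) (auto simp: carrier_C_step_def intro: C_step.conjugation)

lemma cequiv_rotate: "set xs \<subseteq> carrier G \<Longrightarrow> set ys \<subseteq> carrier G \<Longrightarrow> cequiv G (xs @ ys) (ys @ xs)"
proof (induction ys arbitrary: xs rule: rev_induct)
  case (snoc y ys)
  have "cequiv G ((xs @ ys) @ [y]) (y # xs @ ys)"
    using snoc.prems by (intro cequiv_conjugation) auto
  moreover have "cequiv G ((y # xs) @ ys) (ys @ (y # xs))"
    using snoc by (intro snoc.IH) auto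
  ultimately show ?case by (auto intro: cequiv_trans)
qed simp

(* Conjugating a whole word by one of its letters is a ~_C move: rotate the letter
   to the end, slide it back to the front, and rotate back. *)
lemma cequiv_conj_letter: "set u \<subseteq> carrier G \<Longrightarrow> x \<in> set u \<Longrightarrow> cequiv G u (map (conjg G x) u)"
proof -
  assume u: "set u \<subseteq> carrier G" and x: "x \<in> set u"
  then obtain xs ys where split: "u = xs @ x # ys" by (meson split_list)
  have xc: "x \<in> carrier G" using u x by auto
  have conj_closed: "set (map (conjg G x) ys) \<subseteq> carrier G" "set (map (conjg G x) xs @ [x]) \<subseteq> carrier G"
    using u split xc by auto
  have "cequiv G u ((ys @ xs) @ [x])"
    using cequiv_rotate[of "xs @ [x]" ys] u split by auto
  also have "cequiv G ((ys @ xs) @ [x]) (x # ys @ xs)"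
    using u split xc by (intro cequiv_conjugation) auto
  also have "cequiv G (x # ys @ xs) (map (conjg G x) ys @ map (conjg G x) xs @ [x])"
    using hurwitz_imp_cequiv[OF hurwitz_slide[of x "ys @ xs"]] u split xc by auto
  also have "cequiv G (map (conjg G x) ys @ map (conjg G x) xs @ [x]) (map (conjg G x) u)"
    using cequiv_rotate[OF conj_closed] xc by (simp add: split)
  finally show ?thesis .
qed

lemma cequiv_conj_pow: "set u \<subseteq> carrier G \<Longrightarrow> x \<in> set u \<Longrightarrow> cequiv G u (map (conjg G (x [^] (n::nat))) u)"
proof (induction n)
  case 0 then show ?case by (simp add: map_idI subset_iff)
next
  case (Suc n)
  have xc: "x \<in> carrier G" using Suc.prems by auto
  have "x \<in> set (map (conjg G (x [^] n)) u)"
    using Suc.prems xc by (auto intro!: image_eqI[of x _ x] simp: conjg_comm nat_pow_Suc2[symmetric])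
  then have "cequiv G (map (conjg G (x [^] n)) u) (map (conjg G x) (map (conjg G (x [^] n)) u))"
    using Suc.prems xc by (intro cequiv_conj_letter) auto
  moreover have "map (conjg G x) (map (conjg G (x [^] n)) u) = map (conjg G (x [^] Suc n)) u"
    using Suc.prems xc by (simp add: map_conjg_mult nat_pow_Suc2[symmetric] del: map_map nat_pow_Suc)
  ultimately show ?case using Suc xc by (metis cequiv_trans)
qed


section \<open>The local braid move\<close>

lemma braid_conjugation_identity:
  assumes c: "x \<in> carrier G" "y \<in> carrier G" "z \<in> carrier G"
    and xy: "x \<otimes> (y \<otimes> x) = y \<otimes> (x \<otimes> y)" and yz: "y \<otimes> (z \<otimes> y) = z \<otimes> (y \<otimes> z)"
  shows "conjg G (inv (lprod G [y, x, z, y])) x = z"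
proof -
  have "lprod G [y, x, z, y] \<otimes> z = y \<otimes> (x \<otimes> (z \<otimes> (y \<otimes> z)))" using c by (simp add: m_assoc)
  also have "\<dots> = y \<otimes> (x \<otimes> (y \<otimes> (z \<otimes> y)))" using yz by simp
  also have "\<dots> = (y \<otimes> (x \<otimes> y)) \<otimes> (z \<otimes> y)" using c by (simp add: m_assoc)
  also have "\<dots> = (x \<otimes> (y \<otimes> x)) \<otimes> (z \<otimes> y)" using xy by simp
  also have "\<dots> = x \<otimes> lprod G [y, x, z, y]" using c by (simp add: m_assoc)
  finally have e: "lprod G [y, x, z, y] \<otimes> z = x \<otimes> lprod G [y, x, z, y]" .
  have P: "lprod G [y, x, z, y] \<in> carrier G" using c by simp
  have "conjg G (inv (lprod G [y, x, z, y])) x = inv (lprod G [y, x, z, y]) \<otimes> (x \<otimes> lprod G [y, x, z, y])"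
    unfolding conjg_def using c P by (simp add: m_assoc)
  also have "\<dots> = z" unfolding e[symmetric] using c P by simp
  finally show ?thesis .
qed

(* The heart of the induction step (for x = a_{2l+1}, y = a_{2l+2}, z = a_{2l+3}):
     x^m(y) x z x^m(y) x^m  ~H  z^{m+1} z^{-(m+1)}(y x z(y)).
   Slide x^m to the front, through yxzy (where it turns into z^m), and finally
   apply one elementary transformation to z y. *)
lemma braid_local_move:
  assumes c: "x \<in> carrier G" "y \<in> carrier G" "z \<in> carrier G"
    and xy: "x \<otimes> (y \<otimes> x) = y \<otimes> (x \<otimes> y)" and yz: "y \<otimes> (z \<otimes> y) = z \<otimes> (y \<otimes> z)"
    and xz: "x \<otimes> z = z \<otimes> x"
  shows "hurwitz G ([conjg G (x [^] m) y, x, z, conjg G (x [^] m) y] @ replicate m x)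
           (replicate (Suc m) z @ map (conjg G (inv (z [^] Suc m))) [y, x, conjg G z y])"
proof -
  have xm: "x [^] m \<in> carrier G" "inv (x [^] m) \<in> carrier G" using c by auto
  have "x \<otimes> inv (x [^] m) = inv (x [^] m) \<otimes> x"
    using c by (intro comm_inv comm_pow) auto
  then have cx: "conjg G (inv (x [^] m)) x = x"
    using c xm by (intro conjg_comm) auto
  have "z \<otimes> inv (x [^] m) = inv (x [^] m) \<otimes> z"
    using c xz by (intro comm_inv comm_pow) auto
  then have cz: "conjg G (inv (x [^] m)) z = z"
    using c xm by (intro conjg_comm) auto
  have "hurwitz G ([conjg G (x [^] m) y, x, z, conjg G (x [^] m) y] @ replicate m x)
               (replicate m x @ [y, x, z, y])"
    using hurwitz_slide_pow_left[of x "[conjg G (x [^] m) y, x, z, conjg G (x [^] m) y]" m] c xm cx cz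
    by simp
  also have "hurwitz G (replicate m x @ [y, x, z, y]) ([y, x, z, y] @ replicate m z)"
    using c braid_conjugation_identity[OF c xy yz] by (intro hurwitz_pow_through_block) auto
  also have "hurwitz G ([y, x, z, y] @ replicate m z) ([y, x, conjg G z y] @ replicate (Suc m) z)"
    using hurwitz_ctx[OF hurwitz_elem[of z y], of "[y, x]" "replicate m z"] c
    by (simp add: set_replicate_conv_if)
  also have "hurwitz G ([y, x, conjg G z y] @ replicate (Suc m) z)
      (replicate (Suc m) z @ map (conjg G (inv (z [^] Suc m))) [y, x, conjg G z y])"
    using hurwitz_slide_pow_left[of z "[y, x, conjg G z y]" "Suc m"] c
    by (simp del: replicate_Suc nat_pow_Suc)
  finally show ?thesis .
qed


section \<open>Chains of twists\<close>

lemma chain_carrier: "twist_chain G a n \<Longrightarrow> 1 \<le> i \<Longrightarrow> i \<le> n \<Longrightarrow> a i \<in> carrier G"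
  by (auto simp: twist_chain_def)

lemma chain_braid: "twist_chain G a n \<Longrightarrow> 1 \<le> i \<Longrightarrow> Suc i \<le> n \<Longrightarrow>
   a i \<otimes> (a (Suc i) \<otimes> a i) = a (Suc i) \<otimes> (a i \<otimes> a (Suc i))"
  using chain_carrier[of a n i] chain_carrier[of a n "Suc i"]
  by (auto simp: twist_chain_def m_assoc)

lemma chain_comm:
  assumes "twist_chain G a n" "1 \<le> i" "i + 2 \<le> j" "j \<le> n"
  shows "a i \<otimes> a j = a j \<otimes> a i"
proof -
  have "i \<in> {1..n}" "j \<in> {1..n}" using assms(2-4) by auto
  with assms(1,3) show ?thesis unfolding twist_chain_def by blast
qed

lemma chain_mono:
  assumes "twist_chain G a n" "k \<le> n"
  shows "twist_chain G a k"
proof -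
  have "\<forall>i\<in>{1..k}. a i \<in> carrier G" using assms by (auto intro: chain_carrier)
  moreover have "\<forall>i. 1 \<le> i \<and> i < k \<longrightarrow> a i \<otimes> a (Suc i) \<otimes> a i = a (Suc i) \<otimes> a i \<otimes> a (Suc i)"
    using assms unfolding twist_chain_def by auto
  moreover have "\<forall>i j. i \<in> {1..k} \<and> j \<in> {1..k} \<and> i + 2 \<le> j \<longrightarrow> a i \<otimes> a j = a j \<otimes> a i"
    using assms by (auto intro: chain_comm)
  ultimately show ?thesis unfolding twist_chain_def by blast
qed

lemma chain_letters_closed: "twist_chain G a n \<Longrightarrow> k \<le> Suc n \<Longrightarrow> set (map a (rev [1..<k])) \<subseteq> carrier G"
  by (auto intro: chain_carrier)

lemma chain_letters_commute:
  assumes "twist_chain G a n" "k < j" "j \<le> n"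
  shows "\<forall>u\<in>set (map a (rev [1..<k])). a j \<otimes> u = u \<otimes> a j"
proof
  fix u assume "u \<in> set (map a (rev [1..<k]))"
  then obtain i where "1 \<le> i" "i < k" "u = a i" by auto
  then show "a j \<otimes> u = u \<otimes> a j" using chain_comm[OF assms(1), of i j] assms(2,3) by simp
qed

lemma chain_bcurves_closed: "twist_chain G a n \<Longrightarrow> 2*l+1 \<le> n \<Longrightarrow>
  set (map (bcurve G a) (rev (map (\<lambda>j. 2*j) [1..<l+1]))) \<subseteq> carrier G"
  by (auto simp: bcurve_def intro!: conjg_closed chain_carrier)

lemma chain_bcurves_commute:
  assumes tc: "twist_chain G a n" and j: "2*l+3 \<le> j" "j \<le> n"
  shows "\<forall>u\<in>set (map (bcurve G a) (rev (map (\<lambda>j. 2*j) [1..<l+1]))). a j \<otimes> u = u \<otimes> a j"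
proof
  fix u assume "u \<in> set (map (bcurve G a) (rev (map (\<lambda>j. 2*j) [1..<l+1])))"
  then obtain i where i: "1 \<le> i" "i \<le> l" "u = conjg G (a (2*i+1)) (a (2*i))"
    by (auto simp: bcurve_def)
  have "a (2*i+1) \<otimes> a j = a j \<otimes> a (2*i+1)" "a (2*i) \<otimes> a j = a j \<otimes> a (2*i)"
    using chain_comm[OF tc, of "2*i+1" j] chain_comm[OF tc, of "2*i" j] i j by auto
  moreover have "a j \<in> carrier G" "a (2*i+1) \<in> carrier G" "a (2*i) \<in> carrier G"
    using i j by (auto intro!: chain_carrier[OF tc])
  ultimately show "a j \<otimes> u = u \<otimes> a j" using comm_conjg i(3) by simp
qed

lemma chain_inv: "twist_chain G a n \<Longrightarrow> twist_chain G (\<lambda>i. inv (a i)) n"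
proof -
  assume tc: "twist_chain G a n"
  have braid: "inv (a i) \<otimes> inv (a (Suc i)) \<otimes> inv (a i) = inv (a (Suc i)) \<otimes> inv (a i) \<otimes> inv (a (Suc i))"
    if "1 \<le> i" "i < n" for i
  proof -
    have c: "a i \<in> carrier G" "a (Suc i) \<in> carrier G" using that by (auto intro: chain_carrier[OF tc])
    have "inv (a i \<otimes> (a (Suc i) \<otimes> a i)) = inv (a (Suc i) \<otimes> (a i \<otimes> a (Suc i)))"
      using chain_braid[OF tc, of i] that by simp
    then show ?thesis using c by (simp add: inv_mult_group m_assoc)
  qed
  have comm: "inv (a i) \<otimes> inv (a j) = inv (a j) \<otimes> inv (a i)"
    if "i \<in> {1..n}" "j \<in> {1..n}" "i + 2 \<le> j" for i j
  proof -
    have c: "a i \<in> carrier G" "a j \<in> carrier G" using that by (auto intro: chain_carrier[OF tc])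
    have "inv (a j \<otimes> a i) = inv (a i \<otimes> a j)" using chain_comm[OF tc, of i j] that by simp
    then show ?thesis using c by (simp add: inv_mult_group)
  qed
  show ?thesis
    unfolding twist_chain_def using braid comm by (auto intro!: inv_closed chain_carrier[OF tc])
qed

end

section \<open>The mapping class phi_l\<close>

definition psi :: "('a, 'b) monoid_scheme \<Rightarrow> (nat \<Rightarrow> 'a) \<Rightarrow> nat \<Rightarrow> 'a" where
  "psi G a l = foldr (\<lambda>j acc. (a (2*j+1) [^]\<^bsub>G\<^esub> (j+1)) \<otimes>\<^bsub>G\<^esub> acc) (rev [0..<l]) \<one>\<^bsub>G\<^esub>"

lemma phi_psi: "phi G a l = a (2*l+1) [^]\<^bsub>G\<^esub> (l+1) \<otimes>\<^bsub>G\<^esub> psi G a l"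
  by (simp add: phi_def psi_def)

lemma psi_Suc: "psi G a (Suc l) = phi G a l"
  by (simp add: phi_def psi_def)

lemma phi_Suc: "phi G a (Suc l) = a (2*l+3) [^]\<^bsub>G\<^esub> (l+2) \<otimes>\<^bsub>G\<^esub> phi G a l"
  unfolding phi_psi[of G a "Suc l"] psi_Suc by (simp add: numeral_3_eq_3)

context group
begin

lemma phi_0: "a 1 \<in> carrier G \<Longrightarrow> phi G a 0 = a 1"
  by (simp add: phi_def)

lemma psi_closed: "twist_chain G a n \<Longrightarrow> 2*l \<le> Suc n \<Longrightarrow> psi G a l \<in> carrier G"
proof (induction l)
  case (Suc l)
  then have "a (2*l+1) \<in> carrier G" by (intro chain_carrier) auto
  with Suc show ?case by (simp add: psi_Suc phi_psi)
qed (simp add: psi_def)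

lemma psi_commute:
  assumes tc: "twist_chain G a n" and w: "w \<in> carrier G"
  shows "2*l \<le> Suc n \<Longrightarrow> (\<forall>j<l. w \<otimes> a (2*j+1) = a (2*j+1) \<otimes> w) \<Longrightarrow>
    w \<otimes> psi G a l = psi G a l \<otimes> w"
proof (induction l)
  case (Suc l)
  have ac: "a (2*l+1) \<in> carrier G" using tc Suc.prems(1) by (intro chain_carrier) auto
  have "w \<otimes> a (2*l+1) [^] (l+1) = a (2*l+1) [^] (l+1) \<otimes> w"
    using w ac Suc.prems(2) by (intro comm_pow) auto
  moreover have "w \<otimes> psi G a l = psi G a l \<otimes> w"
    using Suc by auto
  ultimately show ?case
    using comm_mult[OF w] ac psi_closed[OF tc, of l] Suc.prems(1) by (simp add: psi_Suc phi_psi)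
qed (simp add: psi_def w)

lemma phi_closed: "twist_chain G a (2*l+1) \<Longrightarrow> phi G a l \<in> carrier G"
  using psi_closed[of a "2*l+1" "Suc l"] by (simp add: psi_Suc)

lemma phi_conj_letters:
  assumes tc: "twist_chain G a (2*l+3)"
  shows "conjg G (phi G a l) (a (2*l+1)) = a (2*l+1)"
    and "conjg G (phi G a l) (a (2*l+2)) = conjg G (a (2*l+1) [^] (l+1)) (a (2*l+2))"
    and "conjg G (phi G a l) (a (2*l+3)) = a (2*l+3)"
proof -
  let ?x = "a (2*l+1)" and ?p = "psi G a l"
  have pc: "?p \<in> carrier G" using psi_closed[OF tc, of l] by simp
  have xc: "?x \<in> carrier G" using tc by (intro chain_carrier) auto
  have psi_fix: "conjg G ?p (a k) = a k" if "2*l+1 \<le> k" "k \<le> 2*l+3" for k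
  proof -
    have ak: "a k \<in> carrier G" using tc that by (intro chain_carrier) auto
    have "a k \<otimes> ?p = ?p \<otimes> a k"
      using psi_commute[OF tc ak] chain_comm[OF tc, of _ k] that by auto
    then show ?thesis using ak pc by (intro conjg_comm) auto
  qed
  have x_pow_fix: "conjg G (?x [^] (l+1)) (a k) = a k" if "k = 2*l+1 \<or> k = 2*l+3" for k
  proof -
    have ak: "a k \<in> carrier G" using tc that by (intro chain_carrier) auto
    have "a k \<otimes> ?x = ?x \<otimes> a k"
      using that chain_comm[OF tc, of "2*l+1" "2*l+3"] by auto
    then show ?thesis using ak xc by (intro conjg_comm comm_pow[symmetric]) auto
  qed
  have phi_conj: "conjg G (phi G a l) (a k) = conjg G (?x [^] (l+1)) (a k)"
    if "2*l+1 \<le> k" "k \<le> 2*l+3" for k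
    using psi_fix[OF that] conjg_mult[of "?x [^] (l+1)" ?p "a k"] pc xc tc that
    by (simp add: phi_psi chain_carrier)
  show "conjg G (phi G a l) (a (2*l+1)) = a (2*l+1)"
    using phi_conj x_pow_fix by simp
  show "conjg G (phi G a l) (a (2*l+2)) = conjg G (a (2*l+1) [^] (l+1)) (a (2*l+2))"
    using phi_conj by simp
  show "conjg G (phi G a l) (a (2*l+3)) = a (2*l+3)"
    using phi_conj x_pow_fix by simp
qed

(* phi_l of the chain of inverse twists is phi_l^{-1}; the induction uses that
   a_{2l+3} commutes with phi_l. *)
lemma phi_inv_chain: "twist_chain G a (2*l+1) \<Longrightarrow> phi G (\<lambda>i. inv (a i)) l = inv (phi G a l)"
proof (induction l)
  case 0
  then have "a 1 \<in> carrier G" by (intro chain_carrier) auto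
  then show ?case by (simp add: phi_0)
next
  case (Suc l)
  have tc: "twist_chain G a (2*l+3)" using Suc.prems by (simp add: numeral_3_eq_3)
  have tc': "twist_chain G a (2*l+1)" using chain_mono[OF tc] by simp
  define P where "P = a (2*l+3) [^] (l+2)"
  have zc: "a (2*l+3) \<in> carrier G" using tc by (intro chain_carrier) auto
  have Pc: "P \<in> carrier G" and fc: "phi G a l \<in> carrier G"
    using zc phi_closed[OF tc'] by (simp_all add: P_def)
  have "a (2*l+3) \<otimes> psi G a (Suc l) = psi G a (Suc l) \<otimes> a (2*l+3)"
    using psi_commute[OF tc zc, of "Suc l"] chain_comm[OF tc, of _ "2*l+3"] by auto
  then have "P \<otimes> phi G a l = phi G a l \<otimes> P"
    unfolding P_def psi_Suc using zc fc by (intro comm_pow[symmetric]) auto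
  then have "inv P \<otimes> inv (phi G a l) = inv (P \<otimes> phi G a l)"
    using Pc fc by (simp add: inv_mult_group)
  moreover have "inv (a (2*l+3)) [^] (l+2) = inv P"
    unfolding P_def using zc by (simp only: nat_pow_inv)
  ultimately show ?case
    using Suc.IH[OF tc'] by (simp add: phi_Suc P_def)
qed

end

section \<open>Part (a)\<close>

definition source_word :: "(nat \<Rightarrow> 'a) \<Rightarrow> nat \<Rightarrow> 'a list" where
  "source_word a l = map a (rev [1..<2*l+1]) @ map a (rev [1..<2*l+2])"

definition target_word :: "('a, 'b) monoid_scheme \<Rightarrow> (nat \<Rightarrow> 'a) \<Rightarrow> nat \<Rightarrow> 'a list" where
  "target_word G a l = replicate (l+1) (a (2*l+1)) @ map a (rev [1..<2*l+1])
      @ map (bcurve G a) (rev (map (\<lambda>j. 2*j) [1..<l+1]))"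

lemma source_word_eq: "source_word a l = map a (rev [1..<2*l+1]) @ [a (2*l+1)] @ map a (rev [1..<2*l+1])"
  by (simp add: source_word_def)

lemma source_word_Suc: "source_word a (Suc l) = [a (2*l+2), a (2*l+1)] @ map a (rev [1..<2*l+1]) @
   [a (2*l+3), a (2*l+2), a (2*l+1)] @ map a (rev [1..<2*l+1])"
  by (simp add: source_word_def numeral_3_eq_3)

lemma target_word_eq: "target_word G a l = replicate (Suc l) (a (2*l+1)) @ map a (rev [1..<2*l+1])
      @ map (bcurve G a) (rev (map (\<lambda>j. 2*j) [1..<l+1]))"
  by (simp add: target_word_def)

lemma target_word_Suc: "target_word G a (Suc l) = replicate (Suc (Suc l)) (a (2*l+3)) @ [a (2*l+2), a (2*l+1)]
      @ map a (rev [1..<2*l+1]) @ [bcurve G a (2*l+2)] @ map (bcurve G a) (rev (map (\<lambda>j. 2*j) [1..<l+1]))"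
  by (simp add: target_word_def numeral_3_eq_3)

context group
begin

(* The induction step of part (a), isolated from the chain: x, y, z play the roles
   of a_{2l+1}, a_{2l+2}, a_{2l+3}, A the word a_{2l} ... a_1, B the word b_{2l} ... b_2
   and f the element phi_l.  From the instance of the induction hypothesis with
   context D y x z y, the word for l+1 is reached by
   (1) moving z y through A, (2) the induction hypothesis, (3) the local braid move,
   (4) a global conjugation by z^{m+1}, and (5) moving z(y) = b_{2l+2} through A. *)
lemma braid_induction_step:
  assumes c: "x \<in> carrier G" "y \<in> carrier G" "z \<in> carrier G" "f \<in> carrier G"
    and words: "set A \<subseteq> carrier G" "set B \<subseteq> carrier G" "set D \<subseteq> carrier G" "set E \<subseteq> carrier G"
    and xy: "x \<otimes> (y \<otimes> x) = y \<otimes> (x \<otimes> y)" and yz: "y \<otimes> (z \<otimes> y) = z \<otimes> (y \<otimes> z)"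
    and xz: "x \<otimes> z = z \<otimes> x"
    and yA: "\<forall>u\<in>set A. y \<otimes> u = u \<otimes> y" and zA: "\<forall>u\<in>set A. z \<otimes> u = u \<otimes> z"
    and zB: "\<forall>u\<in>set B. z \<otimes> u = u \<otimes> z"
    and IH: "cequiv G (D @ [y, x, z, y] @ A @ [x] @ A @ E)
               (map (conjg G f) D @ [conjg G (x [^] m) y, x, z, conjg G (x [^] m) y] @ replicate m x
                  @ A @ B @ map (conjg G f) E)"
  shows "cequiv G (D @ [y, x] @ A @ [z, y, x] @ A @ E)
           (map (conjg G (z [^] Suc m \<otimes> f)) D @ replicate (Suc m) z @ [y, x] @ A @ [conjg G z y] @ B
              @ map (conjg G (z [^] Suc m \<otimes> f)) E)"
proof -
  define h where "h = z [^] Suc m"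
  define b where "b = conjg G z y"
  let ?fD = "map (conjg G f) D" and ?fE = "map (conjg G f) E"
  let ?hD = "map (conjg G (h \<otimes> f)) D" and ?hE = "map (conjg G (h \<otimes> f)) E"
  have hc: "h \<in> carrier G" and bc: "b \<in> carrier G" using c by (simp_all add: h_def b_def)
  have h_comm: "conjg G h u = u" if "u \<in> carrier G" "z \<otimes> u = u \<otimes> z" for u
    using that c comm_pow[of u z "Suc m"] by (intro conjg_comm) (auto simp: h_def simp del: nat_pow_Suc)
  have hz: "conjg G h z = z" using h_comm c(3) by simp
  have hA: "map (conjg G h) A = A" and hB: "map (conjg G h) B = B"
    using words zA zB by (auto intro!: map_idI h_comm)
  have bA: "\<forall>u\<in>set A. b \<otimes> u = u \<otimes> b"
    using words(1) yA zA comm_conjg[OF _ c(3,2)] by (auto simp: b_def subset_iff)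
  have zyA: "\<forall>w\<in>set [z, y]. \<forall>u\<in>set A. w \<otimes> u = u \<otimes> w"
    using yA zA by simp
  have fDc: "set ?fD \<subseteq> carrier G" and fABEc: "set (A @ B @ ?fE) \<subseteq> carrier G"
    using c words by auto
  have hDc: "set (?hD @ replicate (Suc m) z @ [y, x]) \<subseteq> carrier G" and hBEc: "set (B @ ?hE) \<subseteq> carrier G"
    using c words hc by auto
  have "cequiv G (D @ [y, x] @ A @ [z, y, x] @ A @ E) (D @ [y, x, z, y] @ A @ [x] @ A @ E)"
    using hurwitz_imp_cequiv[OF hurwitz_ctx[OF hurwitz_sym[OF hurwitz_commuting_words[OF _ words(1) zyA]],
          of "D @ [y, x]" "x # A @ E"]] c words
    by simp
  also note IH
  also have "cequiv G (?fD @ [conjg G (x [^] m) y, x, z, conjg G (x [^] m) y] @ replicate m x @ A @ B @ ?fE)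
      (?fD @ replicate (Suc m) z @ map (conjg G (inv h)) [y, x, b] @ A @ B @ ?fE)"
    using hurwitz_imp_cequiv[OF hurwitz_ctx[OF braid_local_move[OF c(1-3) xy yz xz, of m] fDc fABEc]]
    by (simp add: h_def b_def)
  also have "cequiv G \<dots> (map (conjg G h) (?fD @ replicate (Suc m) z @ map (conjg G (inv h)) [y, x, b] @ A @ B @ ?fE))"
    unfolding h_def using c words bc by (intro cequiv_conj_pow) auto
  also have "\<dots> = ?hD @ replicate (Suc m) z @ [y, x] @ ([b] @ A) @ B @ ?hE"
    using c words bc hc by (simp add: map_conjg_mult hA hB hz del: map_map)
  also have "cequiv G \<dots> (?hD @ replicate (Suc m) z @ [y, x] @ (A @ [b]) @ B @ ?hE)"
    using hurwitz_imp_cequiv[OF hurwitz_ctx[OF hurwitz_slide_comm[OF bc words(1) bA] hDc hBEc]] by simp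
  finally show ?thesis by (simp add: h_def b_def)
qed

lemma part_a_general:
  assumes "twist_chain G a (2*l+1)" "set D \<subseteq> carrier G" "set E \<subseteq> carrier G"
  shows "cequiv G (D @ source_word a l @ E)
           (map (conjg G (phi G a l)) D @ target_word G a l @ map (conjg G (phi G a l)) E)"
  using assms
proof (induction l arbitrary: D E)
  case 0
  then have "a 1 \<in> carrier G" by (intro chain_carrier) auto
  then show ?case using cequiv_conj_letter[of "D @ [a 1] @ E" "a 1"] 0
    by (simp add: source_word_def target_word_def phi_0)
next
  case (Suc l)
  let ?x = "a (2*l+1)" and ?y = "a (2*l+2)" and ?z = "a (2*l+3)"
  let ?A = "map a (rev [1..<2*l+1])" and ?B = "map (bcurve G a) (rev (map (\<lambda>j. 2*j) [1..<l+1]))"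
  have tc: "twist_chain G a (2*l+3)" using Suc.prems(1) by (simp add: numeral_3_eq_3)
  have tc': "twist_chain G a (2*l+1)" using chain_mono[OF tc] by simp
  have letters: "?x \<in> carrier G" "?y \<in> carrier G" "?z \<in> carrier G"
    using tc by (auto intro: chain_carrier)
  have IH: "cequiv G (D @ [?y, ?x, ?z, ?y] @ ?A @ [?x] @ ?A @ E)
      (map (conjg G (phi G a l)) D @ [conjg G (?x [^] (l+1)) ?y, ?x, ?z, conjg G (?x [^] (l+1)) ?y]
         @ replicate (l+1) ?x @ ?A @ ?B @ map (conjg G (phi G a l)) E)"
    using Suc.IH[OF tc', of "D @ [?y, ?x, ?z, ?y]" E] Suc.prems letters phi_conj_letters[OF tc]
    by (simp add: source_word_eq target_word_eq)
  have "?x \<otimes> (?y \<otimes> ?x) = ?y \<otimes> (?x \<otimes> ?y)" "?y \<otimes> (?z \<otimes> ?y) = ?z \<otimes> (?y \<otimes> ?z)" "?x \<otimes> ?z = ?z \<otimes> ?x"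
    using chain_braid[OF tc, of "2*l+1"] chain_braid[OF tc, of "2*l+2"] chain_comm[OF tc, of "2*l+1" "2*l+3"]
    by (simp_all add: numeral_3_eq_3)
  from braid_induction_step[OF letters phi_closed[OF tc'] chain_letters_closed[OF tc']
      chain_bcurves_closed[OF tc'] Suc.prems(2,3) this
      chain_letters_commute[OF tc, of "2*l+1" "2*l+2"] chain_letters_commute[OF tc, of "2*l+1" "2*l+3"]
      chain_bcurves_commute[OF tc, of l "2*l+3"] IH]
  show ?case
    by (simp add: source_word_Suc target_word_Suc phi_Suc bcurve_def numeral_3_eq_3 del: upt_Suc)
qed

end

section \<open>Part (b) by inversion\<close>

context group
begin

(* Reversing a word and inverting its letters maps an elementary transformation
   p q -> p(q) p to the reverse of one (for the letters p(q)^{-1}, p^{-1}) and a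
   conjugation to a conjugation; hence it preserves ~_C. *)
lemma carrier_C_step_rev_inv:
  "carrier_C_step G u v \<Longrightarrow> carrier_C_step G (rev (map (m_inv G) v)) (rev (map (m_inv G) u))"
  unfolding carrier_C_step_def
proof (elim conjE)
  assume st: "C_step G u v" and uc: "set u \<subseteq> carrier G" and vc: "set v \<subseteq> carrier G"
  from st have "C_step G (rev (map (m_inv G) v)) (rev (map (m_inv G) u))"
  proof cases
    case (elementary xs p q ys)
    have pq: "p \<in> carrier G" "q \<in> carrier G" using uc elementary by auto
    have "conjg G (inv p) (inv (conjg G p q)) = inv q" using pq by (simp add: conjg_inv)
    then show ?thesis
      using C_step.elementary[of G "rev (map (m_inv G) ys)" "inv p" "inv (conjg G p q)" "rev (map (m_inv G) xs)"]
        elementary by simp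
  next
    case (conjugation xs x)
    then show ?thesis using C_step.conjugation[of G "rev (map (m_inv G) xs)" "inv x"] by simp
  qed
  then show "C_step G (rev (map (m_inv G) v)) (rev (map (m_inv G) u)) \<and> set (rev (map (m_inv G) v)) \<subseteq> carrier G
     \<and> set (rev (map (m_inv G) u)) \<subseteq> carrier G" using uc vc by auto
qed

lemma cequiv_rev_inv: "cequiv G u v \<Longrightarrow> cequiv G (rev (map (m_inv G) u)) (rev (map (m_inv G) v))"
  unfolding cequiv_def
proof (induction rule: rtranclp_induct)
  case (step y z)
  have "symclp (carrier_C_step G) (rev (map (m_inv G) y)) (rev (map (m_inv G) z))"
    using step(2) by (auto simp: symclp_def intro: carrier_C_step_rev_inv)
  with step(3) show ?case by (meson rtranclp.rtrancl_into_rtrancl)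
qed simp

lemma map_inv_inv: "set xs \<subseteq> carrier G \<Longrightarrow> map (m_inv G \<circ> m_inv G) xs = xs"
  by (induction xs) auto

lemma map_inv_conjg_inv: "g \<in> carrier G \<Longrightarrow> set xs \<subseteq> carrier G \<Longrightarrow>
  map (m_inv G \<circ> (conjg G g \<circ> m_inv G)) xs = map (conjg G g) xs"
  by (rule map_cong) (auto simp: conjg_inv)

lemma map_inv_bcurve_inv: "twist_chain G a n \<Longrightarrow> (\<forall>i\<in>set M. 1 \<le> i \<and> Suc i \<le> n) \<Longrightarrow>
  map (\<lambda>i. inv (bcurve G (\<lambda>i. inv (a i)) i)) M = map (bbar G a) M"
  by (rule map_cong) (auto simp: bcurve_def bbar_def conjg_inv chain_carrier)

(* Part (b) is part (a) for the chain of inverse twists, read backwards and inverted. *)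
lemma part_b_general:
  assumes tc: "twist_chain G a (2*l+1)" and Dc: "set D \<subseteq> carrier G" and Ec: "set E \<subseteq> carrier G"
  shows "cequiv G (D @ map a [1..<2*l+2] @ map a [1..<2*l+1] @ E)
           (map (conjg G (inv (phi G a l))) D @ map (bbar G a) (map (\<lambda>j. 2*j) [1..<l+1])
              @ map a [1..<2*l+1] @ replicate (l+1) (a (2*l+1)) @ map (conjg G (inv (phi G a l))) E)"
proof -
  define ai where "ai = (\<lambda>i. inv (a i))"
  define D' where "D' = rev (map (m_inv G) E)"
  define E' where "E' = rev (map (m_inv G) D)"
  have tci: "twist_chain G ai (2*l+1)" unfolding ai_def using tc by (rule chain_inv)
  have phc: "phi G a l \<in> carrier G" and phi_eq: "phi G ai l = inv (phi G a l)"
    using phi_closed[OF tc] phi_inv_chain[OF tc] unfolding ai_def by auto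
  have D'c: "set D' \<subseteq> carrier G" and E'c: "set E' \<subseteq> carrier G"
    unfolding D'_def E'_def using Dc Ec by auto
  have "cequiv G (rev (map (m_inv G) (D' @ source_word ai l @ E')))
     (rev (map (m_inv G) (map (conjg G (phi G ai l)) D' @ target_word G ai l @ map (conjg G (phi G ai l)) E')))"
    by (rule cequiv_rev_inv, rule part_a_general[OF tci D'c E'c])
  moreover have "rev (map (m_inv G) (D' @ source_word ai l @ E')) = D @ map a [1..<2*l+2] @ map a [1..<2*l+1] @ E"
    unfolding D'_def E'_def source_word_def ai_def using Dc Ec
    by (simp add: rev_map map_inv_inv del: upt_Suc) (auto simp: chain_carrier[OF tc])
  moreover have "map (\<lambda>i. inv (bcurve G ai i)) (map (\<lambda>j. 2*j) [1..<l+1]) = map (bbar G a) (map (\<lambda>j. 2*j) [1..<l+1])"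
    unfolding ai_def by (rule map_inv_bcurve_inv[OF tc]) auto
  then have "rev (map (m_inv G) (map (conjg G (phi G ai l)) D' @ target_word G ai l @ map (conjg G (phi G ai l)) E'))
     = map (conjg G (inv (phi G a l))) D @ map (bbar G a) (map (\<lambda>j. 2*j) [1..<l+1])
        @ map a [1..<2*l+1] @ replicate (l+1) (a (2*l+1)) @ map (conjg G (inv (phi G a l))) E"
    unfolding D'_def E'_def target_word_def phi_eq using Dc Ec phc
    by (simp add: rev_map map_inv_conjg_inv ai_def del: upt_Suc)
       (auto simp: chain_carrier[OF tc] replicate_app_Cons_same)
  ultimately show ?thesis by simp
qed

end

(* The theorem: parts (a) and (b) with the context words unfolded. *)
theorem lemma3p4:
  fixes G :: "('a, 'b) monoid_scheme" and a :: "nat \<Rightarrow> 'a" and l :: nat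
    and D E :: "'a list"
  assumes "group G" and "l \<ge> 1" and "twist_chain G a (2*l+1)"
    and "set D \<subseteq> carrier G" and "set E \<subseteq> carrier G"
  shows "C_equiv G
           (D @ map a (rev [1..<2*l+1]) @ map a (rev [1..<2*l+2]) @ E)
           (map (conjg G (phi G a l)) D @ replicate (l+1) (a (2*l+1)) @ map a (rev [1..<2*l+1])
              @ map (bcurve G a) (rev (map (\<lambda>j. 2*j) [1..<l+1]))
              @ map (conjg G (phi G a l)) E)
       \<and> C_equiv G
           (D @ map a [1..<2*l+2] @ map a [1..<2*l+1] @ E)
           (map (conjg G (inv\<^bsub>G\<^esub> (phi G a l))) D @ map (bbar G a) (map (\<lambda>j. 2*j) [1..<l+1])
              @ map a [1..<2*l+1] @ replicate (l+1) (a (2*l+1))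
              @ map (conjg G (inv\<^bsub>G\<^esub> (phi G a l))) E)"
proof -
  interpret group G by (rule assms(1))
  show ?thesis
    using cequiv_imp_C_equiv[OF part_a_general[OF assms(3-5)]]
      cequiv_imp_C_equiv[OF part_b_general[OF assms(3-5)]]
    unfolding source_word_def target_word_def by (simp del: upt_Suc)
qed

end
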